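(* Let $F=\{f_i\}_{i=1}^N$ be a uniform Parseval frame for an $n$-dimensional Hilbert space $\mathcal{H}_n$, and let $p>1$. Then $\mathrm{AE}_{\mathcal{N}}^{(1),p}(F)=\frac nN$, and the canonical dual $S_F^{-1}F$ is the unique $1$-erasure numerically optimal dual of $F$, i.e. $\zeta_{\mathcal{N}}^{(1),p}(F)=\{S_F^{-1}F\}$.
   Context: A uniform Parseval frame is a frame $\{f_i\}$ with $\sum_i|\langle f,f_i\rangle|^2=\|f\|^2$ for all $f$ and all $\|f_i\|$ equal; then $S_F=I$ and $S_F^{-1}F=F$. $G=\{g_i\}_{i=1}^N$ is a dual of $F$ if $f=\sum_i\langle f,f_i\rangle g_i$ for all $f$. The numerical radius of an operator $T$ is $\omega(T)=\sup\{|\langle Tf,f\rangle|:\|f\|=1\}$. With $T_F f=(\langle f,f_i\rangle)_i$ the analysis operator and $\mathcal{D}^{(1)}$ the $N\times N$ diagonal matrices with exactly one diagonal entry $1$ and the rest $0$, define $\mathrm{AE}_{\mathcal{N}}^{(1),p}(F,G)=\{\frac1N\sum_{D\in\mathcal{D}^{(1)}}\omega(T_G^*DT_F)^p\}^{1/p}$; here $T_G^*DT_F$ is the operator $f\mapsto\langle f,f_i\rangle g_i$, whose numerical radius is $\frac{|\langle f_i,g_i\rangle|+\|f_i\|\|g_i\|}{2}$. $\mathrm{AE}_{\mathcal{N}}^{(1),p}(F)$ is the infimum of $\mathrm{AE}_{\mathcal{N}}^{(1),p}(F,G)$ over all duals $G$, and $\zeta_{\mathcal{N}}^{(1),p}(F)$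 is the set of duals attaining it. *)

theory Defs
  imports "HOL-Analysis.Analysis"
begin

text \<open>The n-dimensional Hilbert space H_n is modelled as complex ^ 'n (n = CARD('n)),
  with the standard inner product, linear in the first argument.
  A family of N vectors is modelled as a function 'm \<Rightarrow> complex ^ 'n with N = CARD('m).\<close>

definition cinner :: "complex ^ 'n \<Rightarrow> complex ^ 'n \<Rightarrow> complex" where
  "cinner x y = (\<Sum>j\<in>UNIV. x $ j * cnj (y $ j))"

definition cnorm :: "complex ^ 'n \<Rightarrow> real" where
  "cnorm x = sqrt (Re (cinner x x))"

definition parseval_frame :: "('m::finite \<Rightarrow> complex ^ 'n) \<Rightarrow> bool" where
  "parseval_frame F \<longleftrightarrow> (\<forall>f. (\<Sum>i\<in>UNIV. (cmod (cinner f (F i)))\<^sup>2) = (cnorm f)\<^sup>2)"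

definition uniform_frame :: "('m::finite \<Rightarrow> complex ^ 'n) \<Rightarrow> bool" where
  "uniform_frame F \<longleftrightarrow> (\<forall>i j. cnorm (F i) = cnorm (F j))"

definition is_dual :: "('m::finite \<Rightarrow> complex ^ 'n) \<Rightarrow> ('m \<Rightarrow> complex ^ 'n) \<Rightarrow> bool" where
  "is_dual F G \<longleftrightarrow> (\<forall>f. f = (\<Sum>i\<in>UNIV. cinner f (F i) *s G i))"

definition numerical_radius :: "(complex ^ 'n \<Rightarrow> complex ^ 'n) \<Rightarrow> real" where
  "numerical_radius T = (SUP f\<in>{f. cnorm f = 1}. cmod (cinner (T f) f))"

text \<open>The operator T_G^* D T_F for D the diagonal matrix with single 1 at position i.\<close>
definition erasure_op :: "('m \<Rightarrow> complex ^ 'n) \<Rightarrow> ('m \<Rightarrow> complex ^ 'n) \<Rightarrow> 'm \<Rightarrow> complex ^ 'n \<Rightarrow> complex ^ 'n" where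
  "erasure_op F G i = (\<lambda>f. cinner f (F i) *s G i)"

definition AE1 :: "real \<Rightarrow> ('m::finite \<Rightarrow> complex ^ 'n) \<Rightarrow> ('m \<Rightarrow> complex ^ 'n) \<Rightarrow> real" where
  "AE1 p F G = ((1 / real CARD('m)) * (\<Sum>i\<in>UNIV. numerical_radius (erasure_op F G i) powr p)) powr (1 / p)"

definition AE1_opt :: "real \<Rightarrow> ('m::finite \<Rightarrow> complex ^ 'n) \<Rightarrow> real" where
  "AE1_opt p F = (INF G\<in>{G. is_dual F G}. AE1 p F G)"

definition zeta1 :: "real \<Rightarrow> ('m::finite \<Rightarrow> complex ^ 'n) \<Rightarrow> ('m \<Rightarrow> complex ^ 'n) set" where
  "zeta1 p F = {G. is_dual F G \<and> AE1 p F G = AE1_opt p F}"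

end

theory Submission
  imports Defs
begin

text \<open>Write \<open>a = n/N\<close>. Parseval and uniformity give \<open>\<parallel>f\<^sub>i\<parallel>\<^sup>2 = a\<close>. For a dual \<open>G\<close>,
  evaluating the numerical radius \<open>w\<^sub>i\<close> of \<open>f \<mapsto> \<langle>f,f\<^sub>i\<rangle> g\<^sub>i\<close> at \<open>f\<^sub>i\<close> gives
  \<open>w\<^sub>i \<ge> |\<langle>g\<^sub>i,f\<^sub>i\<rangle>|\<close>, while \<open>\<Sum>\<^sub>i \<langle>g\<^sub>i,f\<^sub>i\<rangle> = tr I = n\<close>; so the \<open>w\<^sub>i\<close> have mean at least
  \<open>a\<close>, and by the power-mean inequality their \<open>p\<close>-mean is at least \<open>a\<close>, with equality only
  if every \<open>w\<^sub>i = a\<close>. The canonical dual has \<open>w\<^sub>i = \<parallel>f\<^sub>i\<parallel>\<^sup>2 = a\<close>. For an optimal \<open>G\<close>,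
  \<open>\<Sum>\<^sub>i Re \<langle>g\<^sub>i,f\<^sub>i\<rangle> = n\<close> with every term at most \<open>a\<close> forces \<open>\<langle>g\<^sub>i,f\<^sub>i\<rangle> = a\<close>, and then
  \<open>w\<^sub>i \<le> a\<close> forces \<open>g\<^sub>i = f\<^sub>i\<close>.\<close>

lemma cinner_commute: "cinner y x = cnj (cinner x y)"
  by (simp add: cinner_def mult.commute)

lemma cinner_add_left: "cinner (x + y) z = cinner x z + cinner y z"
  by (simp add: cinner_def distrib_right sum.distrib)

lemma cinner_add_right: "cinner x (y + z) = cinner x y + cinner x z"
  by (simp add: cinner_def distrib_left sum.distrib)

lemma cinner_diff_left: "cinner (x - y) z = cinner x z - cinner y z"
  by (simp add: cinner_def left_diff_distrib sum_subtractf)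

lemma cinner_scale_left: "cinner (c *s x) y = c * cinner x y"
  by (simp add: cinner_def sum_distrib_left mult.assoc)

lemma cinner_scale_right: "cinner x (c *s y) = cnj c * cinner x y"
  by (simp add: cinner_def sum_distrib_left algebra_simps)

lemma cinner_sum_left: "cinner (\<Sum>i\<in>A. x i) y = (\<Sum>i\<in>A. cinner (x i) y)"
  by (simp add: cinner_def sum_distrib_right sum.swap[of _ A])

lemma cinner_axis_left: "cinner (axis j 1) y = cnj (y $ j)"
  by (simp add: cinner_def axis_def if_distrib[where f="\<lambda>a. a * _"] cong: if_cong)

lemma cinner_self: "cinner x x = of_real ((norm x)\<^sup>2)"
  by (simp add: cinner_def norm_vec_def L2_set_def sum_nonneg complex_mult_cnj cmod_power2)

lemma cnorm_eq_norm: "cnorm x = norm x"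
  by (simp add: cnorm_def cinner_self)

lemma Re_cinner: "Re (cinner x y) = inner x y"
  by (simp add: cinner_def inner_vec_def inner_complex_def)

lemma norm_vector_scalar_mult: "norm (c *s x) = cmod c * norm (x :: complex ^ 'n)"
  by (simp add: norm_vec_def norm_mult L2_set_right_distrib)

lemma cinner_Cauchy_Schwarz: "cmod (cinner x y) \<le> norm x * norm y"
proof (cases "cinner x y = 0")
  case False
  define c where "c = cnj (cinner x y) / cmod (cinner x y)"
  have "cmod c = 1"
    using False by (simp add: c_def norm_divide)
  have "cnj (cinner x y) * cinner x y = (of_real (cmod (cinner x y)))\<^sup>2"
    by (metis complex_norm_square mult.commute of_real_power)
  then have "c * cinner x y = cmod (cinner x y)"
    using False by (simp add: c_def power2_eq_square)
  then have "cmod (cinner x y) = inner (c *s x) y"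
    by (metis Re_cinner Re_complex_of_real cinner_scale_left)
  also have "\<dots> \<le> norm (c *s x) * norm y"
    by (rule norm_cauchy_schwarz)
  finally show ?thesis
    using \<open>cmod c = 1\<close> by (simp add: norm_vector_scalar_mult)
qed simp

lemma operator_eq_0_if_cinner_self_eq_0:
  fixes A :: "complex ^ 'n \<Rightarrow> complex ^ 'n"
  assumes add: "\<And>x y. A (x + y) = A x + A y" and scale: "\<And>c x. A (c *s x) = c *s A x"
    and quadratic_form: "\<And>x. cinner (A x) x = 0"
  shows "A x = 0"
proof -
  have polar: "cinner (A x) y = 0" for y
  proof -
    have "cinner (A x) y + cinner (A y) x = 0"
      using quadratic_form[of "x + y"] quadratic_form[of x] quadratic_form[of y]
      by (simp add: add cinner_add_left cinner_add_right add.commute)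
    moreover have "\<i> * (cinner (A y) x - cinner (A x) y) = 0"
      using quadratic_form[of "x + \<i> *s y"] quadratic_form[of x] quadratic_form[of y]
      by (simp add: add scale cinner_add_left cinner_add_right cinner_scale_left cinner_scale_right
          algebra_simps)
    ultimately show ?thesis
      by simp
  qed
  show ?thesis
    using polar[of "A x"] by (simp add: cinner_self)
qed

lemma parseval_frame_self_dual:
  assumes "parseval_frame F"
  shows "is_dual F F"
proof -
  define A where "A x = (\<Sum>i\<in>UNIV. cinner x (F i) *s F i) - x" for x
  have "cinner (A x) x = 0" for x
  proof -
    have "(\<Sum>i\<in>UNIV. cinner x (F i) * cinner (F i) x)
        = (\<Sum>i\<in>UNIV. of_real ((cmod (cinner x (F i)))\<^sup>2))"
      by (intro sum.cong refl) (metis cinner_commute complex_norm_square)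
    also have "\<dots> = of_real ((norm x)\<^sup>2)"
      using assms unfolding parseval_frame_def cnorm_eq_norm by (metis of_real_sum)
    finally show ?thesis
      by (simp add: A_def cinner_diff_left cinner_sum_left cinner_scale_left cinner_self)
  qed
  then have "A x = 0" for x
    by (rule operator_eq_0_if_cinner_self_eq_0[rotated 2])
      (simp_all add: A_def vec_eq_iff cinner_add_left cinner_scale_left distrib_right sum.distrib
        sum_distrib_left right_diff_distrib mult.assoc)
  then show ?thesis
    by (simp add: is_dual_def A_def)
qed

lemma parseval_frame_sum_norm_sq:
  fixes F :: "'m::finite \<Rightarrow> complex ^ 'n"
  assumes "parseval_frame F"
  shows "(\<Sum>i\<in>UNIV. (norm (F i))\<^sup>2) = real CARD('n)"
proof -
  have "(\<Sum>i\<in>UNIV. (cmod (F i $ j))\<^sup>2) = 1" for j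
    using assms[unfolded parseval_frame_def, rule_format, of "axis j 1"]
    by (simp add: cinner_axis_left cnorm_eq_norm)
  then show ?thesis
    by (simp add: norm_vec_def L2_set_def sum_nonneg sum.swap[of _ "UNIV::'n set"])
qed

lemma dual_sum_cinner:
  fixes F G :: "'m::finite \<Rightarrow> complex ^ 'n"
  assumes "is_dual F G"
  shows "(\<Sum>i\<in>UNIV. cinner (G i) (F i)) = of_nat CARD('n)"
proof -
  have "(\<Sum>i\<in>UNIV. G i $ j * cnj (F i $ j)) = 1" for j
    using arg_cong[where f="\<lambda>v. v $ j", OF assms[unfolded is_dual_def, rule_format, of "axis j 1"]]
    by (simp add: cinner_axis_left mult.commute)
  then show ?thesis
    by (simp add: cinner_def sum.swap[of _ "UNIV::'n set"])
qed

lemma cinner_erasure_op: "cinner (erasure_op F G i x) x = cinner x (F i) * cinner (G i) x"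
  by (simp add: erasure_op_def cinner_scale_left)

lemma cmod_cinner_erasure_op_le:
  assumes "norm x = 1"
  shows "cmod (cinner (erasure_op F G i x) x) \<le> norm (F i) * norm (G i)"
  using cinner_Cauchy_Schwarz[of x "F i"] cinner_Cauchy_Schwarz[of "G i" x] assms
  by (simp add: cinner_erasure_op norm_mult mult_mono)

lemma numerical_radius_erasure_op_le:
  "numerical_radius (erasure_op F G i) \<le> norm (F i) * norm (G i)"
  unfolding numerical_radius_def
proof (rule cSUP_least)
  show "{f. cnorm f = 1} \<noteq> {}"
    using cnorm_eq_norm[of "axis undefined 1"] by auto
qed (simp add: cnorm_eq_norm cmod_cinner_erasure_op_le)

lemma numerical_radius_erasure_op_ge:
  assumes "x \<noteq> 0"
  shows "cmod (cinner x (F i) * cinner (G i) x) / (norm x)\<^sup>2 \<le> numerical_radius (erasure_op F G i)"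
proof -
  define c where "c = complex_of_real (1 / norm x)"
  have unit: "cnorm (c *s x) = 1"
    using assms by (simp add: cnorm_eq_norm c_def norm_vector_scalar_mult norm_divide)
  have "cmod (cinner x (F i) * cinner (G i) x) / (norm x)\<^sup>2
      = cmod (cinner (erasure_op F G i (c *s x)) (c *s x))"
    unfolding cinner_erasure_op
    by (simp add: cinner_scale_left cinner_scale_right c_def norm_mult norm_divide power2_eq_square)
  also have "\<dots> \<le> numerical_radius (erasure_op F G i)"
    unfolding numerical_radius_def
  proof (rule cSUP_upper)
    show "bdd_above ((\<lambda>f. cmod (cinner (erasure_op F G i f) f)) ` {f. cnorm f = 1})"
      by (rule bdd_aboveI[where M="norm (F i) * norm (G i)"])
        (auto simp: cnorm_eq_norm cmod_cinner_erasure_op_le)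
  qed (use unit in simp)
  finally show ?thesis .
qed

lemma cmod_cinner_le_numerical_radius_erasure_op:
  assumes "F i \<noteq> 0"
  shows "cmod (cinner (G i) (F i)) \<le> numerical_radius (erasure_op F G i)"
  using numerical_radius_erasure_op_ge[OF assms, of F i G] assms
  by (simp add: cinner_self norm_mult power2_eq_square)

text \<open>Testing the numerical radius at \<open>f\<^sub>i + (g\<^sub>i - f\<^sub>i)/2\<close> gives
  \<open>a (a + b/2) / (a + b/4) \<le> a\<close> with \<open>a = \<parallel>f\<^sub>i\<parallel>\<^sup>2\<close>, \<open>b = \<parallel>g\<^sub>i - f\<^sub>i\<parallel>\<^sup>2\<close>, which forces \<open>b = 0\<close>.\<close>
lemma eq_if_numerical_radius_erasure_op_le:
  assumes "F i \<noteq> 0" and cinner_eq: "cinner (G i) (F i) = of_real ((norm (F i))\<^sup>2)"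
    and radius_le: "numerical_radius (erasure_op F G i) \<le> (norm (F i))\<^sup>2"
  shows "G i = F i"
proof -
  define a where "a = (norm (F i))\<^sup>2"
  define h where "h = G i - F i"
  define b where "b = (norm h)\<^sup>2"
  define x where "x = F i + (1/2) *s h"
  have a: "a > 0" and b: "b \<ge> 0"
    using assms(1) by (simp_all add: a_def b_def)
  have hF: "cinner h (F i) = 0" and Fh: "cinner (F i) h = 0"
    using cinner_eq cinner_commute[of "F i" h]
    by (simp_all add: h_def cinner_diff_left cinner_self)
  have G: "G i = F i + h"
    by (simp add: h_def)
  have FF: "cinner (F i) (F i) = of_real a" and hh: "cinner h h = of_real b"
    by (simp_all add: a_def b_def cinner_self)
  have "cinner x (F i) * cinner (G i) x = of_real (a * (a + b/2))"
    by (simp add: G x_def cinner_add_left cinner_add_right cinner_scale_left cinner_scale_right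
        hF Fh FF hh algebra_simps)
  then have product: "cmod (cinner x (F i) * cinner (G i) x) = a * (a + b/2)"
    using a b by (simp only: norm_of_real) simp
  have "cinner x x = of_real (a + b/4)"
    by (simp add: x_def cinner_add_left cinner_add_right cinner_scale_left cinner_scale_right
        hF Fh FF hh)
  then have norm_x: "(norm x)\<^sup>2 = a + b/4"
    unfolding cinner_self of_real_eq_iff .
  then have "x \<noteq> 0"
    using a b by auto
  then have "a * (a + b/2) / (a + b/4) \<le> a"
    using numerical_radius_erasure_op_ge[of x F i G] radius_le[folded a_def] product norm_x by simp
  then have "b = 0"
    using a b by (simp add: divide_le_eq algebra_simps)
  then show ?thesis
    using G by (simp add: b_def)
qed

lemma Bernoulli_inequality_powr_strict:
  fixes x p :: real
  assumes "0 \<le> x" "x \<noteq> 1" "1 < p"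
  shows "1 + p * (x - 1) < x powr p"
proof (cases "x = 0")
  case False
  then have x: "0 < x"
    using assms(1) by simp
  have "x - 1 < x * ln x"
    using ln_diff_less[of 1 x] x assms(2) by (simp add: field_simps)
  then have "(p - 1) * (x - 1) < (p - 1) * (x * ln x)"
    using assms(3) by simp
  then have "x + (p - 1) * (x - 1) < x * (1 + (p - 1) * ln x)"
    by (simp add: algebra_simps)
  also have "\<dots> \<le> x * exp ((p - 1) * ln x)"
    using x exp_ge_add_one_self[of "(p - 1) * ln x"] by simp
  also have "\<dots> = x * x powr (p - 1)"
    using x by (simp add: powr_def mult.commute)
  also have "\<dots> = x powr p"
    using x by (simp add: powr_mult_base)
  finally show ?thesis
    by (simp add: algebra_simps)
qed (use assms in simp)

lemma powr_gt_tangent: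
  fixes a w p :: real
  assumes "0 \<le> w" "0 < a" "w \<noteq> a" "1 < p"
  shows "a powr p + p * a powr (p - 1) * (w - a) < w powr p"
proof -
  have "a powr p * (1 + p * (w / a - 1)) < a powr p * (w / a) powr p"
    using Bernoulli_inequality_powr_strict[of "w / a" p] assms by simp
  then show ?thesis
    using assms by (simp add: powr_divide powr_diff algebra_simps field_simps)
qed

lemma powr_ge_tangent:
  fixes a w p :: real
  assumes "0 \<le> w" "0 < a" "1 < p"
  shows "a powr p + p * a powr (p - 1) * (w - a) \<le> w powr p"
  using powr_gt_tangent[of w a p] assms by (cases "w = a") simp_all

text \<open>The power-mean inequality with its equality case, by summing tangent lines of
  \<open>t powr p\<close> at \<open>a\<close>.\<close>
lemma sum_powr_ge_card_mult:
  fixes w :: "'i \<Rightarrow> real" and a p :: real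
  assumes "finite I" "\<And>i. i \<in> I \<Longrightarrow> 0 \<le> w i" "0 < a" "1 < p"
    and mean: "real (card I) * a \<le> (\<Sum>i\<in>I. w i)"
  shows "real (card I) * a powr p \<le> (\<Sum>i\<in>I. w i powr p)"
    and "(\<Sum>i\<in>I. w i powr p) = real (card I) * a powr p \<Longrightarrow> i \<in> I \<Longrightarrow> w i = a"
proof -
  define gap where "gap i = w i powr p - (a powr p + p * a powr (p - 1) * (w i - a))" for i
  have gap_nonneg: "0 \<le> gap i" if "i \<in> I" for i
    using powr_ge_tangent[of "w i" a p] assms that by (simp add: gap_def)
  have decomposition: "(\<Sum>i\<in>I. w i powr p)
      = real (card I) * a powr p + p * a powr (p - 1) * ((\<Sum>i\<in>I. w i) - real (card I) * a)
        + (\<Sum>i\<in>I. gap i)"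
    by (simp add: gap_def sum_subtractf sum.distrib sum_distrib_left sum_distrib_right algebra_simps)
  have slack: "0 \<le> p * a powr (p - 1) * ((\<Sum>i\<in>I. w i) - real (card I) * a)"
    using assms by simp
  have gaps: "0 \<le> (\<Sum>i\<in>I. gap i)"
    using gap_nonneg by (simp add: sum_nonneg)
  show "real (card I) * a powr p \<le> (\<Sum>i\<in>I. w i powr p)"
    using decomposition slack gaps by linarith
  show "w i = a" if "(\<Sum>i\<in>I. w i powr p) = real (card I) * a powr p" and "i \<in> I" for i
  proof -
    have "gap i = 0"
      using decomposition slack gaps that sum_nonneg_eq_0_iff[OF \<open>finite I\<close>, of gap] gap_nonneg
      by auto
    then show "w i = a"
      using powr_gt_tangent[of "w i" a p] assms that(2) by (auto simp: gap_def)
  qed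
qed

lemma AE1_powr:
  fixes F G :: "'m::finite \<Rightarrow> complex ^ 'n"
  assumes "0 < p"
  shows "AE1 p F G powr p
    = (\<Sum>i\<in>UNIV. numerical_radius (erasure_op F G i) powr p) / real CARD('m)"
  using assms by (simp add: AE1_def powr_powr sum_nonneg)

locale uniform_parseval_frame =
  fixes F :: "'m::finite \<Rightarrow> complex ^ 'n"
  assumes parseval: "parseval_frame F" and uniform: "uniform_frame F"
begin

lemma norm_sq_frame: "(norm (F i))\<^sup>2 = real CARD('n) / real CARD('m)"
proof -
  have "(\<Sum>j\<in>UNIV. (norm (F j))\<^sup>2) = (\<Sum>j\<in>(UNIV :: 'm set). (norm (F i))\<^sup>2)"
    using uniform unfolding uniform_frame_def cnorm_eq_norm by metis
  then show ?thesis
    using parseval_frame_sum_norm_sq[OF parseval] by (simp add: field_simps)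
qed

lemma frame_nonzero: "F i \<noteq> 0"
  using norm_sq_frame[of i] by auto

lemma numerical_radius_erasure_op_nonneg: "0 \<le> numerical_radius (erasure_op F G i)"
  using cmod_cinner_le_numerical_radius_erasure_op[of F i G, OF frame_nonzero] norm_ge_zero
  by (rule order_trans[rotated])

lemma sum_numerical_radius_ge:
  assumes "is_dual F G"
  shows "real CARD('n) \<le> (\<Sum>i\<in>UNIV. numerical_radius (erasure_op F G i))"
proof -
  have "real CARD('n) = cmod (\<Sum>i\<in>UNIV. cinner (G i) (F i))"
    using dual_sum_cinner[OF assms] by simp
  also have "\<dots> \<le> (\<Sum>i\<in>UNIV. cmod (cinner (G i) (F i)))"
    by (rule norm_sum)
  also have "\<dots> \<le> (\<Sum>i\<in>UNIV. numerical_radius (erasure_op F G i))"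
    by (intro sum_mono cmod_cinner_le_numerical_radius_erasure_op frame_nonzero)
  finally show ?thesis .
qed

lemma numerical_radius_canonical_dual:
  "numerical_radius (erasure_op F F i) = real CARD('n) / real CARD('m)"
  using numerical_radius_erasure_op_le[of F F i]
    cmod_cinner_le_numerical_radius_erasure_op[of F i F, OF frame_nonzero]
  by (simp only: cinner_self norm_sq_frame norm_of_real power2_eq_square[symmetric])

lemma AE1_canonical_dual:
  assumes "0 < p"
  shows "AE1 p F F = real CARD('n) / real CARD('m)"
  using assms by (simp add: AE1_def numerical_radius_canonical_dual powr_powr)

lemma AE1_dual_ge:
  assumes "is_dual F G" and "1 < p"
  shows "real CARD('n) / real CARD('m) \<le> AE1 p F G"
proof -
  have "real CARD('m) * (real CARD('n) / real CARD('m)) powr p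
      \<le> (\<Sum>i\<in>UNIV. numerical_radius (erasure_op F G i) powr p)"
    using sum_numerical_radius_ge[OF assms(1)] assms(2) numerical_radius_erasure_op_nonneg
    by (intro sum_powr_ge_card_mult(1)) simp_all
  then have "((real CARD('n) / real CARD('m)) powr p) powr (1 / p) \<le> AE1 p F G"
    unfolding AE1_def using assms(2) by (intro powr_mono2) (simp_all add: field_simps)
  then show ?thesis
    using assms(2) by (simp add: powr_powr)
qed

lemma optimal_dual_eq_canonical:
  assumes dual: "is_dual F G" and "1 < p" and optimal: "AE1 p F G = real CARD('n) / real CARD('m)"
  shows "G = F"
proof
  fix i
  define a where "a = real CARD('n) / real CARD('m)"
  define z where "z j = cinner (G j) (F j)" for j
  have "0 < a"
    by (simp add: a_def)
  moreover have "real (card (UNIV :: 'm set)) * a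
      \<le> (\<Sum>j\<in>UNIV. numerical_radius (erasure_op F G j))"
    using sum_numerical_radius_ge[OF dual] by (simp add: a_def)
  moreover have "(\<Sum>j\<in>UNIV. numerical_radius (erasure_op F G j) powr p)
      = real (card (UNIV :: 'm set)) * a powr p"
    using AE1_powr[of p F G] optimal \<open>1 < p\<close> by (simp add: a_def)
  ultimately have radius: "numerical_radius (erasure_op F G j) = a" for j
    by (rule sum_powr_ge_card_mult(2)
        [OF finite_class.finite_UNIV numerical_radius_erasure_op_nonneg[of G] _ \<open>1 < p\<close>]) simp
  have z_le: "cmod (z j) \<le> a" for j
    using cmod_cinner_le_numerical_radius_erasure_op[of F j G, OF frame_nonzero] radius
    by (simp add: z_def)
  have Re_le: "0 \<le> a - Re (z j)" for j
    using z_le[of j] complex_Re_le_cmod[of "z j"] by linarith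
  have "(\<Sum>j\<in>UNIV. a - Re (z j)) = 0"
    using arg_cong[OF dual_sum_cinner[OF dual], of Re] by (simp add: z_def a_def sum_subtractf)
  then have Re: "Re (z i) = a"
    using sum_nonneg_eq_0_iff[of UNIV "\<lambda>j. a - Re (z j)"] Re_le by simp
  have "(Re (z i))\<^sup>2 + (Im (z i))\<^sup>2 \<le> a\<^sup>2"
    using power_mono[OF z_le[of i] norm_ge_zero, of 2] by (simp add: cmod_power2)
  with Re have "z i = of_real a"
    by (simp add: complex_eq_iff)
  then show "G i = F i"
    using radius[of i] frame_nonzero[of i] norm_sq_frame[of i]
    by (intro eq_if_numerical_radius_erasure_op_le) (simp_all add: z_def a_def)
qed

end

theorem proposition4p1:
  fixes F :: "'m::finite \<Rightarrow> complex ^ 'n" and p :: real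
  assumes "parseval_frame F" and "uniform_frame F" and "p > 1"
  shows "AE1_opt p F = real CARD('n) / real CARD('m) \<and> zeta1 p F = {F}"
proof -
  interpret uniform_parseval_frame F
    using assms(1,2) by unfold_locales
  have self_dual: "is_dual F F"
    using assms(1) by (rule parseval_frame_self_dual)
  have canonical: "AE1 p F F = real CARD('n) / real CARD('m)"
    using assms(3) by (simp add: AE1_canonical_dual)
  have optimum: "AE1_opt p F = real CARD('n) / real CARD('m)"
    unfolding AE1_opt_def
    using self_dual AE1_dual_ge assms(3)
    by (intro cInf_eq_minimum[OF image_eqI[where f="AE1 p F", OF canonical[symmetric]]]) auto
  moreover have "zeta1 p F = {F}"
    using self_dual canonical optimal_dual_eq_canonical assms(3)
    unfolding zeta1_def optimum by auto
  ultimately show ?thesis ..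
qed

end
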